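(* Let $Q$ be a quadrilateral in $K^2$. The bisector locus of $Q$ is degenerate if and only if there is a pair $L,L'$ of parallel sides of $Q$ or the two diagonals $L,L'$ of $Q$ are parallel. In this case, the bisector locus of $Q$ is the union of the midline of $L$ and $L'$ and the line through the midpoints of $L$ and $L'$.
   Context: $K$ is a field of characteristic $\neq 2$, and we work in $K^2$ (inside the projective plane). Every line $L$ has an equation $tX-uY+v=0$ normalized so that $t=1$ if $u=0$ and $u=1$ if $u\neq 0$; the coefficients are denoted $t_L,u_L,v_L$. A quadrilateral $Q=ABA'B'$ consists of four distinct lines $A,B,A',B'$ (sides), not all through one point, with adjacent sides ($A,B$; $B,A'$; $A',B'$; $B',A$) not parallel; opposite sides ($A,A'$; $B,B'$) may be parallel. Vertices: $A\cap B$, $B\cap A'$, $A'\cap B'$, $B'\cap A$ (two may coincide if three sides are concurrent). Diagonals: the lines through nonadjacent vertices. The midpoint of a side or diagonal is the midpoint of the two vertices of $Q$ on it. The centroid $(h,k)$ is the midpoint of the midpoints of the diagonals (equivalently the average of the vertices). A diagonal point is the intersection of a pair of opposite sides or of the diagonals. The midline of two distinct parallel lines is the line formed by the midpoints of points of one with points of the other. Define $\alpha=t_Au_Bu_{A'}u_{B'}-u_At_Bu_{A'}u_{B'}+u_Au_Bt_{A'}u_{B'}-u_Au_Bu_{A'}t_{B'}$, $\beta=t_Au_Bt_{A'}u_{B'}-u_At_Bu_{A'}t_{B'}$, $\gamma=t_At_Bt_{A'}u_{B'}-t_At_Bu_{A'}t_{B'}+t_Au_Bt_{A'}t_{B'}-u_At_Bt_{A'}t_{B'}$,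 $\Phi_Q(X,Y)=\gamma X^2-2\beta XY+\alpha Y^2$. A line $\ell$ crosses a pair $\{\ell_1,\ell_2\}$ if it is distinct from both and not parallel to both; $\mathrm{mid}_{\{\ell_1,\ell_2\}}(\ell)$ is the midpoint of the points where $\ell$ meets $\ell_1,\ell_2$ (the point at infinity of $\ell$ if one of them is at infinity). $\ell$ bisects $Q$ if $\mathrm{mid}_{\mathsf P}(\ell)$ is the same for all pairs $\mathsf P$ among $\{A,A'\},\{B,B'\}$ that $\ell$ crosses; this common point is the midpoint of the bisector. The bisector locus of $Q$ is the set of midpoints of bisectors of $Q$; it is the zero set of the conic $\Phi_Q(X-h,Y-k)-\Phi_Q(a-h,b-k)$, where $(a,b)$ is any finite diagonal point of $Q$. A conic (quadratic polynomial) over $K$ is degenerate if it is a product of linear polynomials over the algebraic closure of $K$. *)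

theory Defs
  imports "HOL-Algebra.Algebraic_Closure_Type"
begin

text \<open>Points of K^2 are pairs. A line is stored by its normalized coefficient
triple (t, u, v) of the equation t X - u Y + v = 0, where t = 1 if u = 0 and
u = 1 if u is nonzero.\<close>

type_synonym 'a pt = "'a \<times> 'a"
type_synonym 'a line = "'a \<times> 'a \<times> 'a"

definition tL :: "'a line \<Rightarrow> 'a" where "tL L = fst L"
definition uL :: "'a line \<Rightarrow> 'a" where "uL L = fst (snd L)"
definition vL :: "'a line \<Rightarrow> 'a" where "vL L = snd (snd L)"

definition is_line :: "'a::field line \<Rightarrow> bool" where
  "is_line L \<longleftrightarrow> (uL L = 0 \<and> tL L = 1) \<or> uL L = 1"

definition on_line :: "'a::field pt \<Rightarrow> 'a line \<Rightarrow> bool" where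
  "on_line p L \<longleftrightarrow> tL L * fst p - uL L * snd p + vL L = 0"

definition points_of :: "'a::field line \<Rightarrow> 'a pt set" where
  "points_of L = {p. on_line p L}"

definition parallel :: "'a::field line \<Rightarrow> 'a line \<Rightarrow> bool" where
  "parallel L M \<longleftrightarrow> L \<noteq> M \<and> tL L = tL M \<and> uL L = uL M"

definition same_dir :: "'a::field line \<Rightarrow> 'a line \<Rightarrow> bool" where
  "same_dir L M \<longleftrightarrow> tL L = tL M \<and> uL L = uL M"

definition meet :: "'a::field line \<Rightarrow> 'a line \<Rightarrow> 'a pt" where
  "meet L M = (THE p. on_line p L \<and> on_line p M)"

definition line_through :: "'a::field pt \<Rightarrow> 'a pt \<Rightarrow> 'a line" where
  "line_through p q = (THE L. is_line L \<and> on_line p L \<and> on_line q L)"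

definition midpt :: "'a::field pt \<Rightarrow> 'a pt \<Rightarrow> 'a pt" where
  "midpt p q = ((fst p + fst q) / 2, (snd p + snd q) / 2)"

definition line_pts :: "'a::field pt \<Rightarrow> 'a pt \<Rightarrow> 'a pt set" where
  "line_pts p q = {(fst p + s * (fst q - fst p), snd p + s * (snd q - snd p)) | s. True}"

definition midline :: "'a::field line \<Rightarrow> 'a line \<Rightarrow> 'a pt set" where
  "midline L M = {midpt p q | p q. on_line p L \<and> on_line q M}"

definition is_quad :: "'a::field line \<Rightarrow> 'a line \<Rightarrow> 'a line \<Rightarrow> 'a line \<Rightarrow> bool" where
  "is_quad A B A' B' \<longleftrightarrow>
     is_line A \<and> is_line B \<and> is_line A' \<and> is_line B' \<and>
     distinct [A, B, A', B'] \<and>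
     \<not> (\<exists>p. on_line p A \<and> on_line p B \<and> on_line p A' \<and> on_line p B') \<and>
     \<not> same_dir A B \<and> \<not> same_dir B A' \<and> \<not> same_dir A' B' \<and> \<not> same_dir B' A"

definition V1 where "V1 A B A' B' = meet A B"
definition V2 where "V2 A B A' B' = meet B A'"
definition V3 where "V3 A B A' B' = meet A' B'"
definition V4 where "V4 A B A' B' = meet B' A"

definition diag1 :: "'a::field line \<Rightarrow> 'a line \<Rightarrow> 'a line \<Rightarrow> 'a line \<Rightarrow> 'a line" where
  "diag1 A B A' B' = line_through (V1 A B A' B') (V3 A B A' B')"
definition diag2 :: "'a::field line \<Rightarrow> 'a line \<Rightarrow> 'a line \<Rightarrow> 'a line \<Rightarrow> 'a line" where
  "diag2 A B A' B' = line_through (V2 A B A' B') (V4 A B A' B')"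

definition midA where "midA A B A' B' = midpt (V1 A B A' B') (V4 A B A' B')"
definition midB where "midB A B A' B' = midpt (V1 A B A' B') (V2 A B A' B')"
definition midA' where "midA' A B A' B' = midpt (V2 A B A' B') (V3 A B A' B')"
definition midB' where "midB' A B A' B' = midpt (V3 A B A' B') (V4 A B A' B')"
definition midD1 where "midD1 A B A' B' = midpt (V1 A B A' B') (V3 A B A' B')"
definition midD2 where "midD2 A B A' B' = midpt (V2 A B A' B') (V4 A B A' B')"

definition centroid :: "'a::field line \<Rightarrow> 'a line \<Rightarrow> 'a line \<Rightarrow> 'a line \<Rightarrow> 'a pt" where
  "centroid A B A' B' = midpt (midD1 A B A' B') (midD2 A B A' B')"

definition is_finite_diag_point :: "'a::field line \<Rightarrow> 'a line \<Rightarrow> 'a line \<Rightarrow> 'a line \<Rightarrow> 'a pt \<Rightarrow> bool" where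
  "is_finite_diag_point A B A' B' p \<longleftrightarrow>
     (\<not> same_dir A A' \<and> p = meet A A') \<or>
     (\<not> same_dir B B' \<and> p = meet B B') \<or>
     (\<not> same_dir (diag1 A B A' B') (diag2 A B A' B') \<and> p = meet (diag1 A B A' B') (diag2 A B A' B'))"

definition alphaQ :: "'a::field line \<Rightarrow> 'a line \<Rightarrow> 'a line \<Rightarrow> 'a line \<Rightarrow> 'a" where
  "alphaQ A B A' B' =
     tL A * uL B * uL A' * uL B' - uL A * tL B * uL A' * uL B'
     + uL A * uL B * tL A' * uL B' - uL A * uL B * uL A' * tL B'"
definition betaQ :: "'a::field line \<Rightarrow> 'a line \<Rightarrow> 'a line \<Rightarrow> 'a line \<Rightarrow> 'a" where
  "betaQ A B A' B' = tL A * uL B * tL A' * uL B' - uL A * tL B * uL A' * tL B'"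
definition gammaQ :: "'a::field line \<Rightarrow> 'a line \<Rightarrow> 'a line \<Rightarrow> 'a line \<Rightarrow> 'a" where
  "gammaQ A B A' B' =
     tL A * tL B * tL A' * uL B' - tL A * tL B * uL A' * tL B'
     + tL A * uL B * tL A' * tL B' - uL A * tL B * tL A' * tL B'"

definition PhiQ :: "'a::field line \<Rightarrow> 'a line \<Rightarrow> 'a line \<Rightarrow> 'a line \<Rightarrow> 'a \<Rightarrow> 'a \<Rightarrow> 'a" where
  "PhiQ A B A' B' x y =
     gammaQ A B A' B' * x^2 - 2 * betaQ A B A' B' * x * y + alphaQ A B A' B' * y^2"

text \<open>The conic Phi_Q(X-h,Y-k) - Phi_Q(a-h,b-k) is degenerate iff it is a product
of linear polynomials over the algebraic closure of K. As the algebraic closure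
is infinite, equality of polynomials is equality of polynomial functions on it;
a product of (at most degree one) linear polynomials of total degree at most two
has (after absorbing constant factors) exactly two factors.\<close>
definition conic_degenerate ::
  "'a::field line \<Rightarrow> 'a line \<Rightarrow> 'a line \<Rightarrow> 'a line \<Rightarrow> 'a pt \<Rightarrow> bool" where
  "conic_degenerate A B A' B' ab \<longleftrightarrow>
     (let cal = to_ac (alphaQ A B A' B'); cbe = to_ac (betaQ A B A' B');
          cga = to_ac (gammaQ A B A' B');
          ch = to_ac (fst (centroid A B A' B')); ck = to_ac (snd (centroid A B A' B'));
          cc = to_ac (PhiQ A B A' B' (fst ab - fst (centroid A B A' B'))
                                    (snd ab - snd (centroid A B A' B')))
      in \<exists>p1 q1 r1 p2 q2 r2 :: 'a alg_closure. \<forall>x y.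
           cga * (x - ch)^2 - 2 * cbe * (x - ch) * (y - ck) + cal * (y - ck)^2 - cc
             = (p1 * x + q1 * y + r1) * (p2 * x + q2 * y + r2))"

text \<open>The midpoint mid_{L1,L2}(l) is represented as an option:
None is the point at infinity of l (when l is parallel to one of L1, L2).\<close>
definition crosses :: "'a::field line \<Rightarrow> 'a line \<Rightarrow> 'a line \<Rightarrow> bool" where
  "crosses l L1 L2 \<longleftrightarrow> l \<noteq> L1 \<and> l \<noteq> L2 \<and> \<not> (same_dir l L1 \<and> same_dir l L2)"

definition midpair :: "'a::field line \<Rightarrow> 'a line \<Rightarrow> 'a line \<Rightarrow> 'a pt option" where
  "midpair L1 L2 l =
     (if same_dir l L1 \<or> same_dir l L2 then None else Some (midpt (meet l L1) (meet l L2)))"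

definition bisects_with_mid ::
  "'a::field line \<Rightarrow> 'a line \<Rightarrow> 'a line \<Rightarrow> 'a line \<Rightarrow> 'a line \<Rightarrow> 'a pt option \<Rightarrow> bool" where
  "bisects_with_mid A B A' B' l m \<longleftrightarrow>
     is_line l \<and> (crosses l A A' \<or> crosses l B B') \<and>
     (crosses l A A' \<longrightarrow> midpair A A' l = m) \<and>
     (crosses l B B' \<longrightarrow> midpair B B' l = m)"

definition bisector_locus :: "'a::field line \<Rightarrow> 'a line \<Rightarrow> 'a line \<Rightarrow> 'a line \<Rightarrow> 'a pt set" where
  "bisector_locus A B A' B' = {p. \<exists>l. bisects_with_mid A B A' B' l (Some p)}"

end

theory Submission
  imports Defs "HOL-Library.Product_Plus"
begin

text \<open>
  Walking along a line l from a point m on it, l meets L1 and L2 after parameters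
  s1, s2 with s_i * dir_det L_i l = - line_eval L_i m, so m is the midpoint of the
  crossings iff s1 + s2 = 0, a condition linear in the normal (tL l, uL l) of l.
  Hence m is the midpoint of a bisector iff the two vectors pair_normal A A' m and
  pair_normal B B' m are linearly dependent, i.e. iff their determinant
  bisector_poly m vanishes. This polynomial is quadratic with quadratic part 2 Phi_Q,
  and its centre is the centroid, so bisector_poly m = bisector_poly cen + 2 Phi_Q (m - cen).
  It vanishes at every finite diagonal point (a, b), so the constant term
  Phi_Q (a - h, b - k) of the conic is - bisector_poly cen / 2, and a computation with
  the vertices gives 8 bisector_poly cen = - D(A,A') D(B,B') delta, where D is the
  determinant of two directions and delta that of the two diagonal vectors.
  Since Phi_Q has the nonzero discriminant - D(A,B) D(B,A') D(A',B') D(B',A), the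
  conic is degenerate iff this constant vanishes, i.e. iff two opposite sides or the
  two diagonals are parallel. Then the locus splits into two lines: for parallel sides
  bisector_poly factors explicitly, and for parallel diagonals Phi_Q vanishes on the
  direction of the diagonals and on that of the line through their midpoints.
\<close>

section \<open>Lines as affine forms\<close>

definition line_eval :: "'a::field line \<Rightarrow> 'a pt \<Rightarrow> 'a" where
  "line_eval L p = tL L * fst p - uL L * snd p + vL L"

definition line_lin :: "'a::field line \<Rightarrow> 'a pt \<Rightarrow> 'a" where
  "line_lin L w = tL L * fst w - uL L * snd w"

definition dir_det :: "'a::field line \<Rightarrow> 'a line \<Rightarrow> 'a" where
  "dir_det L M = tL L * uL M - uL L * tL M"

definition det2 :: "'a::field pt \<Rightarrow> 'a pt \<Rightarrow> 'a" where
  "det2 p q = fst p * snd q - snd p * fst q"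

definition coeff_det :: "'a::field line \<Rightarrow> 'a line \<Rightarrow> 'a line \<Rightarrow> 'a" where
  "coeff_det L M N =
     tL L * (uL M * vL N - vL M * uL N) - uL L * (tL M * vL N - vL M * tL N)
     + vL L * (tL M * uL N - uL M * tL N)"

lemma powers_of_two_nonzero:
  assumes "(2::'a::field) \<noteq> 0"
  shows "(4::'a) \<noteq> 0" "(8::'a) \<noteq> 0" "(16::'a) \<noteq> 0"
proof -
  have "(4::'a) = 2 * 2" "(8::'a) = 2 * 4" "(16::'a) = 2 * 8" by simp_all
  then show "(4::'a) \<noteq> 0" "(8::'a) \<noteq> 0" "(16::'a) \<noteq> 0" using assms by (metis mult_eq_0_iff)+
qed

lemma on_line_iff_eval: "on_line p L \<longleftrightarrow> line_eval L p = 0"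
  by (simp add: on_line_def line_eval_def)

lemma line_eval_add: "line_eval L (p + w) = line_eval L p + line_lin L w"
  by (simp add: line_eval_def line_lin_def algebra_simps)

lemma line_eval_diff: "line_eval L p - line_eval L q = line_lin L (p - q)"
  by (simp add: line_eval_def line_lin_def algebra_simps)

lemma line_eval_affine:
  "line_eval L (fst p + s * (fst q - fst p), snd p + s * (snd q - snd p))
     = line_eval L p + s * (line_eval L q - line_eval L p)"
  by (simp add: line_eval_def algebra_simps)

lemma line_eval_midpt:
  fixes L :: "'a::field line"
  assumes "(2::'a) \<noteq> 0"
  shows "line_eval L (midpt p q) = (line_eval L p + line_eval L q) / 2"
  using assms powers_of_two_nonzero(1)[OF assms] by (simp add: line_eval_def midpt_def field_simps)

lemma line_eval_shift:
  "line_eval L (p + (s * uL l, s * tL l)) = line_eval L p + s * dir_det L l"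
  by (simp add: line_eval_def dir_det_def algebra_simps)

lemma midpt_on_line:
  fixes L :: "'a::field line"
  shows "(2::'a) \<noteq> 0 \<Longrightarrow> on_line p L \<Longrightarrow> on_line q L \<Longrightarrow> on_line (midpt p q) L"
  by (simp add: on_line_iff_eval line_eval_midpt)

lemma is_line_dir_nonzero: "is_line L \<Longrightarrow> tL L \<noteq> 0 \<or> uL L \<noteq> 0"
  by (auto simp: is_line_def)

lemma same_dir_iff_dir_det: "is_line L \<Longrightarrow> is_line M \<Longrightarrow> same_dir L M \<longleftrightarrow> dir_det L M = 0"
  by (auto simp: is_line_def same_dir_def dir_det_def)

lemma dir_det_swap: "dir_det L M = - dir_det M L"
  by (simp add: dir_det_def algebra_simps)

lemma dir_det_self [simp]: "dir_det L L = 0"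
  by (simp add: dir_det_def algebra_simps)

lemma line_lin_det2: "line_lin L x * line_lin M y - line_lin L y * line_lin M x = - dir_det L M * det2 x y"
  by (simp add: line_lin_def dir_det_def det2_def algebra_simps)

lemma line_eq_iff_coeffs: "L = M \<longleftrightarrow> tL L = tL M \<and> uL L = uL M \<and> vL L = vL M"
  by (cases L; cases M) (auto simp: tL_def uL_def vL_def)

lemma same_dir_common_point_eq: "same_dir L M \<Longrightarrow> on_line p L \<Longrightarrow> on_line p M \<Longrightarrow> L = M"
  unfolding line_eq_iff_coeffs same_dir_def on_line_def by (metis add_left_cancel)

lemma line_lin_eq_0_iff:
  assumes "is_line L"
  shows "line_lin L w = 0 \<longleftrightarrow> (\<exists>s. w = (s * uL L, s * tL L))"
proof
  assume w: "line_lin L w = 0"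
  from assms consider "uL L = 0" "tL L = 1" | "uL L = 1" unfolding is_line_def by blast
  then show "\<exists>s. w = (s * uL L, s * tL L)"
  proof cases
    case 1 then show ?thesis using w by (intro exI[of _ "snd w"]) (cases w, simp add: line_lin_def)
  next
    case 2 then show ?thesis using w by (intro exI[of _ "fst w"]) (cases w, simp add: line_lin_def mult.commute)
  qed
qed (auto simp: line_lin_def)

definition meet_formula :: "'a::field line \<Rightarrow> 'a line \<Rightarrow> 'a pt" where
  "meet_formula L M =
     ((uL L * vL M - vL L * uL M) / dir_det L M, (tL L * vL M - tL M * vL L) / dir_det L M)"

lemma line_eval_meet_formula:
  assumes D: "dir_det L M \<noteq> 0"
  shows "line_eval N (meet_formula L M) = coeff_det L M N / dir_det L M"
proof -
  have "line_eval N (x / d, y / d) = (tL N * x - uL N * y + vL N * d) / d" if "d \<noteq> 0" for x y d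
    using that by (simp add: line_eval_def field_simps)
  moreover have "tL N * (uL L * vL M - vL L * uL M) - uL N * (tL L * vL M - tL M * vL L)
      + vL N * dir_det L M = coeff_det L M N"
    by (simp add: coeff_det_def dir_det_def algebra_simps)
  ultimately show ?thesis using D by (simp add: meet_formula_def)
qed

lemma coeff_det_repeat [simp]: "coeff_det L M L = 0" "coeff_det L M M = 0"
  by (simp_all add: coeff_det_def algebra_simps)

lemma common_point_eq_meet_formula:
  assumes D: "dir_det L M \<noteq> 0" and p: "on_line p L" "on_line p M"
  shows "p = meet_formula L M"
proof -
  have e: "line_eval L p = 0" "line_eval M p = 0" using p by (simp_all add: on_line_iff_eval)
  have "fst p * dir_det L M = uL M * line_eval L p - uL L * line_eval M p + (uL L * vL M - vL L * uL M)"
       "snd p * dir_det L M = tL M * line_eval L p - tL L * line_eval M p + (tL L * vL M - tL M * vL L)"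
    by (simp_all add: line_eval_def dir_det_def algebra_simps)
  then show ?thesis using D e by (cases p) (simp add: meet_formula_def eq_divide_eq)
qed

lemma meet_eq:
  assumes "dir_det L M \<noteq> 0"
  shows "meet L M = meet_formula L M"
  unfolding meet_def
proof (rule the_equality)
  show "on_line (meet_formula L M) L \<and> on_line (meet_formula L M) M"
    using assms by (simp add: on_line_iff_eval line_eval_meet_formula)
qed (use assms common_point_eq_meet_formula in blast)

lemma line_eval_meet: "dir_det L M \<noteq> 0 \<Longrightarrow> line_eval N (meet L M) = coeff_det L M N / dir_det L M"
  by (simp add: meet_eq line_eval_meet_formula)

lemma meet_on_line:
  assumes "dir_det L M \<noteq> 0"
  shows "on_line (meet L M) L" "on_line (meet L M) M"
  using line_eval_meet[OF assms] by (simp_all add: on_line_iff_eval)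

lemma meet_unique: "dir_det L M \<noteq> 0 \<Longrightarrow> on_line p L \<Longrightarrow> on_line p M \<Longrightarrow> p = meet L M"
  by (simp add: meet_eq common_point_eq_meet_formula)

lemma ex_line_through:
  assumes "p \<noteq> q"
  shows "\<exists>L. is_line L \<and> on_line p L \<and> on_line q L"
proof (cases "fst p = fst q")
  case True
  then show ?thesis
    by (intro exI[of _ "(1, 0, - fst p)"]) (simp add: is_line_def on_line_def tL_def uL_def vL_def)
next
  case False
  define k where "k = (snd q - snd p) / (fst q - fst p)"
  have "k * fst q - snd q = k * fst p - snd p" using False by (simp add: k_def field_simps)
  then show ?thesis
    by (intro exI[of _ "(k, 1, snd p - k * fst p)"]) (simp add: is_line_def on_line_def tL_def uL_def vL_def)
qed

lemma lines_eq_if_two_common_points: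
  assumes "is_line L" "is_line M" "p \<noteq> q"
    and "on_line p L" "on_line q L" "on_line p M" "on_line q M"
  shows "L = M"
proof -
  have "dir_det L M = 0" using assms meet_unique by metis
  then show ?thesis using assms same_dir_common_point_eq same_dir_iff_dir_det by metis
qed

lemma line_through:
  assumes "p \<noteq> q"
  shows "is_line (line_through p q)" "on_line p (line_through p q)" "on_line q (line_through p q)"
proof -
  have "\<exists>!L. is_line L \<and> on_line p L \<and> on_line q L"
    using ex_line_through[OF assms] lines_eq_if_two_common_points[OF _ _ assms] by blast
  from theI'[OF this] show "is_line (line_through p q)" "on_line p (line_through p q)"
    "on_line q (line_through p q)" unfolding line_through_def by blast+
qed

lemma det2_swap: "det2 x y = - det2 y x"
  by (simp add: det2_def)

lemma det2_eq_0_if_parallel_to_nonzero: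
  assumes "det2 x n = 0" "det2 y n = 0" "n \<noteq> 0"
  shows "det2 x y = 0"
proof -
  have "det2 x y * fst n = fst y * det2 x n - fst x * det2 y n"
       "det2 x y * snd n = snd y * det2 x n - snd x * det2 y n"
    by (simp_all add: det2_def algebra_simps)
  then show ?thesis using assms by (cases n) (auto simp: zero_prod_def)
qed

lemma det2_eq_0_iff_common_parallel:
  "det2 x y = 0 \<longleftrightarrow> (\<exists>n. n \<noteq> 0 \<and> det2 x n = 0 \<and> det2 y n = 0)"
proof
  assume xy: "det2 x y = 0"
  consider "x \<noteq> 0" | "y \<noteq> 0" | "x = 0" "y = 0" by blast
  then show "\<exists>n. n \<noteq> 0 \<and> det2 x n = 0 \<and> det2 y n = 0"
  proof cases
    case 1 then show ?thesis using xy by (intro exI[of _ x]) (simp add: det2_def algebra_simps)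
  next
    case 2 then show ?thesis using xy by (intro exI[of _ y]) (simp add: det2_def algebra_simps)
  next
    case 3 then show ?thesis by (intro exI[of _ "(1, 0)"]) (simp add: det2_def zero_prod_def)
  qed
qed (use det2_eq_0_if_parallel_to_nonzero in blast)

lemma det2_eq_0_iff_multiple:
  assumes "e \<noteq> 0"
  shows "det2 w e = 0 \<longleftrightarrow> (\<exists>s. w = (s * fst e, s * snd e))"
proof
  assume we: "det2 w e = 0"
  show "\<exists>s. w = (s * fst e, s * snd e)"
  proof (cases "fst e = 0")
    case False
    then show ?thesis using we
      by (intro exI[of _ "fst w / fst e"]) (cases w, simp add: det2_def field_simps)
  next
    case True
    then have "snd e \<noteq> 0" using assms by (cases e) (simp add: zero_prod_def)
    then show ?thesis using we True
      by (intro exI[of _ "snd w / snd e"]) (cases w, simp add: det2_def field_simps)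
  qed
qed (auto simp: det2_def)

lemma mem_line_pts_iff_det2:
  assumes "p \<noteq> q"
  shows "m \<in> line_pts p q \<longleftrightarrow> det2 (m - p) (q - p) = 0"
proof -
  have "q - p \<noteq> 0" using assms by simp
  from det2_eq_0_iff_multiple[OF this, of "m - p"]
  have "det2 (m - p) (q - p) = 0 \<longleftrightarrow> (\<exists>s. m - p = (s * (fst q - fst p), s * (snd q - snd p)))"
    by simp
  also have "\<dots> \<longleftrightarrow> m \<in> line_pts p q"
    unfolding line_pts_def by (cases m; cases p) (auto simp: algebra_simps)
  finally show ?thesis by simp
qed

lemma affine_zero_set_eq_line_pts:
  assumes f: "\<And>m. f m = k1 * fst m + k2 * snd m + k0" and k: "k1 \<noteq> 0 \<or> k2 \<noteq> 0"
    and p: "f p = 0" and q: "f q = 0" and pq: "p \<noteq> q"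
  shows "f m = 0 \<longleftrightarrow> m \<in> line_pts p q"
proof -
  define n where "n = (- k2, k1)"
  have n: "n \<noteq> 0" using k by (auto simp: n_def zero_prod_def)
  have f_diff: "f x - f p = det2 (x - p) n" for x
    by (simp add: f n_def det2_def algebra_simps)
  have qp: "det2 n (q - p) = 0" "q - p \<noteq> 0"
    using f_diff[of q] p q pq det2_swap[of n] by simp_all
  have "f m = 0 \<longleftrightarrow> det2 (m - p) n = 0" using f_diff[of m] p by simp
  also have "\<dots> \<longleftrightarrow> det2 (m - p) (q - p) = 0"
    using det2_eq_0_if_parallel_to_nonzero[OF _ _ n, of "m - p" "q - p"]
      det2_eq_0_if_parallel_to_nonzero[OF _ qp, of "m - p"] qp(1) det2_swap[of n "q - p"] by auto
  also have "\<dots> \<longleftrightarrow> m \<in> line_pts p q" using mem_line_pts_iff_det2[OF pq] by simp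
  finally show ?thesis .
qed

lemma on_line_iff_line_pts:
  assumes "is_line L" "p \<noteq> q" "on_line p L" "on_line q L"
  shows "on_line m L \<longleftrightarrow> m \<in> line_pts p q"
  using affine_zero_set_eq_line_pts[of "line_eval L" "tL L" "- uL L" "vL L" p q m]
    is_line_dir_nonzero[OF assms(1)] assms(2-4)
  by (simp add: on_line_iff_eval line_eval_def)

lemma ex_point_on_line:
  assumes "is_line L"
  shows "\<exists>p. on_line p L"
proof -
  from assms consider "uL L = 0" "tL L = 1" | "uL L = 1" unfolding is_line_def by blast
  then show ?thesis
  proof cases
    case 1 then show ?thesis by (intro exI[of _ "(- vL L, 0)"]) (simp add: on_line_def)
  next
    case 2 then show ?thesis by (intro exI[of _ "(0, vL L)"]) (simp add: on_line_def)
  qed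
qed

lemma midline_iff:
  fixes L M :: "'a::field line"
  assumes two: "(2::'a) \<noteq> 0" and L: "is_line L" and LM: "same_dir L M"
  shows "m \<in> midline L M \<longleftrightarrow> line_eval L m + line_eval M m = 0"
proof -
  have swap: "line_eval L p + line_eval M q = line_eval L q + line_eval M p" for p q
    using LM by (simp add: line_eval_def same_dir_def algebra_simps)
  show ?thesis
  proof
    assume "m \<in> midline L M"
    then obtain p q where m: "m = midpt p q" and pq: "on_line p L" "on_line q M"
      unfolding midline_def by blast
    have "line_eval L m + line_eval M m = ((line_eval L p + line_eval M q) + (line_eval L q + line_eval M p)) / 2"
      using two powers_of_two_nonzero[OF two] by (simp add: m line_eval_midpt field_simps)
    also have "\<dots> = line_eval L p + line_eval M q"
      using two by (simp add: swap[of q p] field_simps)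
    finally show "line_eval L m + line_eval M m = 0" using pq by (simp add: on_line_iff_eval)
  next
    assume m: "line_eval L m + line_eval M m = 0"
    obtain p where p: "on_line p L" using ex_point_on_line[OF L] by blast
    define q where "q = (2 * fst m - fst p, 2 * snd m - snd p)"
    have "line_eval M q = 2 * line_eval M m - line_eval M p"
      by (simp add: q_def line_eval_def algebra_simps)
    also have "\<dots> = line_eval L m + line_eval M m - line_eval L p"
      using swap[of p m] by (simp add: algebra_simps)
    also have "\<dots> = 0" using m p by (simp add: on_line_iff_eval)
    finally have "on_line q M" by (simp add: on_line_iff_eval)
    moreover have "midpt p q = m" using two by (cases m) (simp add: q_def midpt_def)
    ultimately show "m \<in> midline L M" using p unfolding midline_def by blast
  qed
qed

lemma dir_det_eq_0_iff_det2:
  assumes L: "is_line L" "on_line p L" "on_line q L" "p \<noteq> q"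
    and M: "is_line M" "on_line r M" "on_line s M" "r \<noteq> s"
  shows "dir_det L M = 0 \<longleftrightarrow> det2 (q - p) (s - r) = 0"
proof -
  have "line_lin L (q - p) = 0" "line_lin M (s - r) = 0"
    using L M by (simp_all add: line_eval_diff[symmetric] on_line_iff_eval)
  then obtain x y where x: "q - p = (x * uL L, x * tL L)" and y: "s - r = (y * uL M, y * tL M)"
    using line_lin_eq_0_iff L(1) M(1) by metis
  have "x \<noteq> 0" "y \<noteq> 0" using x y L(4) M(4) by (auto simp: zero_prod_def[symmetric])
  moreover have "det2 (q - p) (s - r) = - (x * y) * dir_det L M"
    by (simp add: x y det2_def dir_det_def algebra_simps)
  ultimately show ?thesis by simp
qed

section \<open>Bisectors and the bisector polynomial\<close>

lemma crosses_sym: "crosses l L1 L2 \<longleftrightarrow> crosses l L2 L1"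
  unfolding crosses_def by blast

lemma midpt_sym: "midpt p q = midpt q p"
  unfolding midpt_def by (simp add: add.commute)

lemma midpair_sym: "midpair L1 L2 l = midpair L2 L1 l"
  unfolding midpair_def by (auto simp: midpt_sym)

lemma meet_along_line:
  assumes l: "is_line l" "on_line m l" and L: "is_line L" and D: "dir_det L l \<noteq> 0"
  shows "meet l L = m + (- line_eval L m / dir_det L l * uL l, - line_eval L m / dir_det L l * tL l)"
proof (rule meet_unique[symmetric])
  show "dir_det l L \<noteq> 0" using D dir_det_swap[of L l] by simp
  show "on_line (m + (- line_eval L m / dir_det L l * uL l, - line_eval L m / dir_det L l * tL l)) l"
    using l(2) by (simp only: on_line_iff_eval line_eval_shift) simp
  show "on_line (m + (- line_eval L m / dir_det L l * uL l, - line_eval L m / dir_det L l * tL l)) L"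
    using D by (simp only: on_line_iff_eval line_eval_shift) simp
qed

lemma midpair_eq_Some_iff_crossing_cond:
  fixes l L1 L2 :: "'a::field line"
  assumes two: "(2::'a) \<noteq> 0" and l: "is_line l" "on_line m l"
    and L: "is_line L1" "is_line L2" and D: "dir_det L1 l \<noteq> 0" "dir_det L2 l \<noteq> 0"
  shows "midpair L1 L2 l = Some m
    \<longleftrightarrow> line_eval L1 m * dir_det L2 l + line_eval L2 m * dir_det L1 l = 0"
proof -
  define s where "s = - line_eval L1 m / dir_det L1 l - line_eval L2 m / dir_det L2 l"
  have "\<not> same_dir l L1" "\<not> same_dir l L2"
    using D l(1) L same_dir_iff_dir_det dir_det_swap by (metis neg_0_equal_iff_equal)+
  then have "midpair L1 L2 l = Some (m + (s / 2 * uL l, s / 2 * tL l))"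
    using two meet_along_line[OF l L(1) D(1)] meet_along_line[OF l L(2) D(2)]
    by (cases m) (simp add: midpair_def midpt_def s_def field_simps)
  moreover have "m + (s / 2 * uL l, s / 2 * tL l) = m \<longleftrightarrow> s = 0"
    using two is_line_dir_nonzero[OF l(1)] by (cases m) auto
  moreover have "s = 0 \<longleftrightarrow> line_eval L1 m * dir_det L2 l + line_eval L2 m * dir_det L1 l = 0"
  proof -
    have "s * (dir_det L1 l * dir_det L2 l)
        = - (line_eval L1 m * dir_det L2 l + line_eval L2 m * dir_det L1 l)"
      using D by (simp add: s_def field_simps)
    then show ?thesis using D by (metis mult_eq_0_iff neg_equal_0_iff_equal)
  qed
  ultimately show ?thesis by (metis option.inject)
qed

lemma crossing_cond_eq_0_iff_if_same_dir:
  assumes l: "is_line l" "on_line m l" and L1: "same_dir l L1" and L2: "is_line L2"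
  shows "line_eval L1 m * dir_det L2 l + line_eval L2 m * dir_det L1 l = 0 \<longleftrightarrow> \<not> crosses l L1 L2"
proof -
  have "dir_det L1 l = 0" using L1 by (simp add: same_dir_def dir_det_def algebra_simps)
  moreover have "line_eval L1 m = 0 \<longleftrightarrow> l = L1"
    using same_dir_common_point_eq[OF L1 l(2)] l(2) by (auto simp: on_line_iff_eval)
  moreover have "dir_det L2 l = 0 \<longleftrightarrow> same_dir l L2"
    using same_dir_iff_dir_det[OF l(1) L2] dir_det_swap[of L2 l] by auto
  ultimately show ?thesis using L1 unfolding crosses_def same_dir_def by auto
qed

lemma midpoint_of_crossings_iff:
  fixes l L1 L2 :: "'a::field line"
  assumes two: "(2::'a) \<noteq> 0" and l: "is_line l" "on_line m l" and L: "is_line L1" "is_line L2"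
  shows "(crosses l L1 L2 \<longrightarrow> midpair L1 L2 l = Some m)
    \<longleftrightarrow> line_eval L1 m * dir_det L2 l + line_eval L2 m * dir_det L1 l = 0"
proof -
  have sd: "same_dir l L \<longleftrightarrow> dir_det L l = 0" if "is_line L" for L
    using same_dir_iff_dir_det[OF l(1) that] dir_det_swap[of L l] by auto
  show ?thesis
  proof (cases "same_dir l L1 \<or> same_dir l L2")
    case True
    then have "midpair L1 L2 l = None" by (simp add: midpair_def)
    moreover have "line_eval L1 m * dir_det L2 l + line_eval L2 m * dir_det L1 l = 0
        \<longleftrightarrow> \<not> crosses l L1 L2"
      using True crossing_cond_eq_0_iff_if_same_dir[OF l _ L(2), of L1]
        crossing_cond_eq_0_iff_if_same_dir[OF l _ L(1), of L2] crosses_sym[of l L1 L2]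
      by (auto simp: add.commute)
    ultimately show ?thesis by auto
  next
    case False
    then have "crosses l L1 L2" unfolding crosses_def same_dir_def by auto
    then show ?thesis using False midpair_eq_Some_iff_crossing_cond[OF two l L] sd L by auto
  qed
qed

lemma midpair_on_line:
  fixes l L1 L2 :: "'a::field line"
  assumes "(2::'a) \<noteq> 0" "is_line l" "is_line L1" "is_line L2" "midpair L1 L2 l = Some m"
  shows "on_line m l"
  using assms meet_on_line same_dir_iff_dir_det midpt_on_line
  by (metis midpair_def option.distinct(1) option.inject)

definition pair_normal :: "'a::field line \<Rightarrow> 'a line \<Rightarrow> 'a pt \<Rightarrow> 'a pt" where
  "pair_normal L1 L2 m =
     (line_eval L1 m * tL L2 + line_eval L2 m * tL L1, line_eval L1 m * uL L2 + line_eval L2 m * uL L1)"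

definition bisector_poly ::
  "'a::field line \<Rightarrow> 'a line \<Rightarrow> 'a line \<Rightarrow> 'a line \<Rightarrow> 'a pt \<Rightarrow> 'a" where
  "bisector_poly A B A' B' m = det2 (pair_normal A A' m) (pair_normal B B' m)"

lemma crossing_cond_eq_det2:
  "line_eval L1 m * dir_det L2 l + line_eval L2 m * dir_det L1 l
     = det2 (pair_normal L1 L2 m) (tL l, uL l)"
  by (simp add: pair_normal_def det2_def dir_det_def algebra_simps)

lemma ex_line_normal_to:
  assumes "n \<noteq> 0"
  shows "\<exists>l. is_line l \<and> on_line m l \<and> det2 (tL l, uL l) n = 0"
proof (cases "snd n = 0")
  case True
  then show ?thesis
    by (intro exI[of _ "(1, 0, - fst m)"]) (simp add: is_line_def on_line_def det2_def tL_def uL_def vL_def)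
next
  case False
  define k where "k = fst n / snd n"
  show ?thesis
    using False by (intro exI[of _ "(k, 1, snd m - k * fst m)"])
      (simp add: is_line_def on_line_def det2_def tL_def uL_def vL_def k_def)
qed

locale quadrilateral =
  fixes A B A' B' :: "'a::field line"
  assumes two: "(2::'a) \<noteq> 0" and quad: "is_quad A B A' B'"
begin

lemma sides: "is_line A" "is_line B" "is_line A'" "is_line B'"
  using quad unfolding is_quad_def by auto

lemma sides_distinct: "A \<noteq> B" "A \<noteq> A'" "A \<noteq> B'" "B \<noteq> A'" "B \<noteq> B'" "A' \<noteq> B'"
  using quad unfolding is_quad_def by auto

lemma adjacent_not_same_dir:
  "\<not> same_dir A B" "\<not> same_dir B A'" "\<not> same_dir A' B'" "\<not> same_dir B' A"
  using quad unfolding is_quad_def by auto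

lemma not_concurrent: "\<not> (on_line p A \<and> on_line p B \<and> on_line p A' \<and> on_line p B')"
  using quad unfolding is_quad_def by blast

lemma adjacent_dir_det_nonzero:
  "dir_det A B \<noteq> 0" "dir_det B A' \<noteq> 0" "dir_det A' B' \<noteq> 0" "dir_det B' A \<noteq> 0"
  using adjacent_not_same_dir same_dir_iff_dir_det sides by blast+

lemma crosses_opposite_pair: "crosses l A A' \<or> crosses l B B'"
proof (rule ccontr)
  define dir :: "'a line \<Rightarrow> 'a pt" where "dir L = (tL L, uL L)" for L
  have sd: "same_dir L M \<longleftrightarrow> dir L = dir M" for L M by (simp add: dir_def same_dir_def)
  assume "\<not> (crosses l A A' \<or> crosses l B B')"
  then have "dir l = dir A \<or> dir l = dir A'" "dir l = dir B \<or> dir l = dir B'"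
    unfolding crosses_def sd by auto
  then show False using adjacent_not_same_dir unfolding sd by auto
qed

lemma mem_bisector_locus_iff: "m \<in> bisector_locus A B A' B' \<longleftrightarrow> bisector_poly A B A' B' m = 0"
proof
  assume "m \<in> bisector_locus A B A' B'"
  then obtain l where l: "is_line l" and cr: "crosses l A A' \<or> crosses l B B'"
    and mA: "crosses l A A' \<longrightarrow> midpair A A' l = Some m"
    and mB: "crosses l B B' \<longrightarrow> midpair B B' l = Some m"
    unfolding bisector_locus_def bisects_with_mid_def by blast
  have m: "on_line m l"
    using cr mA mB midpair_on_line[OF two l sides(1,3)] midpair_on_line[OF two l sides(2,4)] by blast
  have "det2 (pair_normal A A' m) (tL l, uL l) = 0" "det2 (pair_normal B B' m) (tL l, uL l) = 0"
    using mA mB midpoint_of_crossings_iff[OF two l m sides(1,3)] midpoint_of_crossings_iff[OF two l m sides(2,4)]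
    unfolding crossing_cond_eq_det2 by blast+
  moreover have "(tL l, uL l) \<noteq> 0" using is_line_dir_nonzero[OF l] by (auto simp: zero_prod_def)
  ultimately show "bisector_poly A B A' B' m = 0"
    unfolding bisector_poly_def by (rule det2_eq_0_if_parallel_to_nonzero)
next
  assume "bisector_poly A B A' B' m = 0"
  then obtain n where n: "n \<noteq> 0" "det2 (pair_normal A A' m) n = 0" "det2 (pair_normal B B' m) n = 0"
    using det2_eq_0_iff_common_parallel unfolding bisector_poly_def by blast
  obtain l where l: "is_line l" "on_line m l" and ln: "det2 (tL l, uL l) n = 0"
    using ex_line_normal_to[OF n(1)] by blast
  have "det2 (pair_normal A A' m) (tL l, uL l) = 0" "det2 (pair_normal B B' m) (tL l, uL l) = 0"
    using det2_eq_0_if_parallel_to_nonzero[OF _ ln n(1)] n(2,3) by blast+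
  then have "crosses l A A' \<longrightarrow> midpair A A' l = Some m" "crosses l B B' \<longrightarrow> midpair B B' l = Some m"
    using midpoint_of_crossings_iff[OF two l sides(1,3)] midpoint_of_crossings_iff[OF two l sides(2,4)]
    unfolding crossing_cond_eq_det2 by blast+
  then have "bisects_with_mid A B A' B' l (Some m)"
    unfolding bisects_with_mid_def using l crosses_opposite_pair by blast
  then show "m \<in> bisector_locus A B A' B'" unfolding bisector_locus_def by blast
qed

end

section \<open>Expansion about the centroid\<close>

lemma coeff_det_rotate: "coeff_det L M N = coeff_det M N L"
  by (simp add: coeff_det_def algebra_simps)

lemma dir_det_plucker:
  "dir_det A B * dir_det A' B' - dir_det B A' * dir_det B' A = dir_det A A' * dir_det B B'"
  by (simp add: dir_det_def algebra_simps)

lemma coeff_det_identity: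
  "coeff_det A B A' * coeff_det B A' B' * dir_det B' A + coeff_det A' B' A * coeff_det B' A B * dir_det B A'
     = coeff_det A B A' * coeff_det B' A B * dir_det A' B' + coeff_det B A' B' * coeff_det A' B' A * dir_det A B"
  by (simp add: dir_det_def coeff_det_def algebra_simps)

lemma coeff_det_dir_identity:
  "coeff_det A B A' * dir_det A' B' * dir_det B' A * tL B + coeff_det A' B' A * dir_det A B * dir_det B A' * tL B'
   + coeff_det B' A B * dir_det B A' * dir_det A' B' * tL A
   + coeff_det B A' B' * dir_det A B * dir_det B' A * tL A' = 0"
  "coeff_det A B A' * dir_det A' B' * dir_det B' A * uL B + coeff_det A' B' A * dir_det A B * dir_det B A' * uL B'
   + coeff_det B' A B * dir_det B A' * dir_det A' B' * uL A
   + coeff_det B A' B' * dir_det A B * dir_det B' A * uL A' = 0"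
  by (simp_all add: dir_det_def coeff_det_def algebra_simps)

lemma PhiQ_discriminant:
  "alphaQ A B A' B' * gammaQ A B A' B' - betaQ A B A' B' ^ 2
     = - (dir_det A B * dir_det B A' * dir_det A' B' * dir_det B' A)"
  by (simp add: dir_det_def alphaQ_def betaQ_def gammaQ_def algebra_simps power2_eq_square)

lemma PhiQ_scale: "PhiQ A B A' B' (c * x) (c * y) = c^2 * PhiQ A B A' B' x y"
  by (simp add: PhiQ_def algebra_simps power2_eq_square)

definition side_quad ::
  "'a::field line \<Rightarrow> 'a line \<Rightarrow> 'a line \<Rightarrow> 'a line \<Rightarrow> 'a \<Rightarrow> 'a \<Rightarrow> 'a \<Rightarrow> 'a \<Rightarrow> 'a" where
  "side_quad A B A' B' a a' b b' =
     a * b * dir_det A' B' - a * b' * dir_det B A' - a' * b * dir_det B' A + a' * b' * dir_det A B"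

lemma bisector_poly_eq_side_quad:
  "bisector_poly A B A' B' m = side_quad A B A' B' (line_eval A m) (line_eval A' m) (line_eval B m) (line_eval B' m)"
  by (simp add: bisector_poly_def pair_normal_def side_quad_def det2_def dir_det_def algebra_simps)

lemma side_quad_line_lin:
  "side_quad A B A' B' (line_lin A w) (line_lin A' w) (line_lin B w) (line_lin B' w)
     = 2 * PhiQ A B A' B' (fst w) (snd w)"
  by (simp add: side_quad_def line_lin_def dir_det_def PhiQ_def alphaQ_def betaQ_def gammaQ_def
      algebra_simps power2_eq_square)

lemma side_quad_add:
  "side_quad A B A' B' (a + x) (a' + x') (b + y) (b' + y')
     = side_quad A B A' B' a a' b b' + side_quad A B A' B' x x' y y'
       + ((a * y + x * b) * dir_det A' B' - (a * y' + x * b') * dir_det B A'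
          - (a' * y + x' * b) * dir_det B' A + (a' * y' + x' * b') * dir_det A B)"
  by (simp add: side_quad_def algebra_simps)

lemma bisector_poly_same_dir_factor:
  assumes "same_dir A A'"
  shows "bisector_poly A B A' B' m
    = (line_eval A m + line_eval A' m) * (line_eval B m * dir_det A B' + line_eval B' m * dir_det A B)"
  using assms
  by (simp add: same_dir_def bisector_poly_def pair_normal_def det2_def dir_det_def algebra_simps)

context quadrilateral
begin

abbreviation "v1 \<equiv> V1 A B A' B'"
abbreviation "v2 \<equiv> V2 A B A' B'"
abbreviation "v3 \<equiv> V3 A B A' B'"
abbreviation "v4 \<equiv> V4 A B A' B'"
abbreviation "cen \<equiv> centroid A B A' B'"
abbreviation "D1 \<equiv> dir_det A B"
abbreviation "D2 \<equiv> dir_det B A'"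
abbreviation "D3 \<equiv> dir_det A' B'"
abbreviation "D4 \<equiv> dir_det B' A"
abbreviation "T1 \<equiv> coeff_det A B A'"
abbreviation "T2 \<equiv> coeff_det B A' B'"
abbreviation "T3 \<equiv> coeff_det A' B' A"
abbreviation "T4 \<equiv> coeff_det B' A B"
abbreviation "Phi w \<equiv> PhiQ A B A' B' (fst w) (snd w)"

lemma vertices_on_sides:
  "on_line v1 A" "on_line v1 B" "on_line v2 B" "on_line v2 A'"
  "on_line v3 A'" "on_line v3 B'" "on_line v4 B'" "on_line v4 A"
  unfolding V1_def V2_def V3_def V4_def using meet_on_line adjacent_dir_det_nonzero by blast+

lemma line_eval_vertices:
  "line_eval A v1 = 0" "line_eval B v1 = 0" "line_eval A' v1 = T1 / D1" "line_eval B' v1 = T4 / D1"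
  "line_eval B v2 = 0" "line_eval A' v2 = 0" "line_eval A v2 = T1 / D2" "line_eval B' v2 = T2 / D2"
  "line_eval A' v3 = 0" "line_eval B' v3 = 0" "line_eval A v3 = T3 / D3" "line_eval B v3 = T2 / D3"
  "line_eval B' v4 = 0" "line_eval A v4 = 0" "line_eval A' v4 = T3 / D4" "line_eval B v4 = T4 / D4"
proof -
  show "line_eval A v1 = 0" "line_eval B v1 = 0" "line_eval B v2 = 0" "line_eval A' v2 = 0"
    "line_eval A' v3 = 0" "line_eval B' v3 = 0" "line_eval B' v4 = 0" "line_eval A v4 = 0"
    using vertices_on_sides by (simp_all add: on_line_iff_eval)
  show "line_eval A' v1 = T1 / D1" "line_eval B' v1 = T4 / D1"
    using line_eval_meet[OF adjacent_dir_det_nonzero(1)] coeff_det_rotate[of A B B'] coeff_det_rotate[of B B' A]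
    by (simp_all add: V1_def)
  show "line_eval A v2 = T1 / D2" "line_eval B' v2 = T2 / D2"
    using line_eval_meet[OF adjacent_dir_det_nonzero(2)] coeff_det_rotate[of B A' A] coeff_det_rotate[of A' A B]
    by (simp_all add: V2_def)
  show "line_eval A v3 = T3 / D3" "line_eval B v3 = T2 / D3"
    using line_eval_meet[OF adjacent_dir_det_nonzero(3)] coeff_det_rotate[of B A' B']
    by (simp_all add: V3_def)
  show "line_eval A' v4 = T3 / D4" "line_eval B v4 = T4 / D4"
    using line_eval_meet[OF adjacent_dir_det_nonzero(4)] coeff_det_rotate[of B' A A'] coeff_det_rotate[of A A' B']
    by (simp_all add: V4_def)
qed

lemma line_eval_centroid:
  "line_eval L cen = (line_eval L v1 + line_eval L v2 + line_eval L v3 + line_eval L v4) / 4"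
  by (simp add: centroid_def midD1_def midD2_def line_eval_midpt[OF two] add_divide_distrib algebra_simps)

lemma line_eval_centroid_sides:
  "line_eval A cen = (T1 / D2 + T3 / D3) / 4" "line_eval A' cen = (T1 / D1 + T3 / D4) / 4"
  "line_eval B cen = (T2 / D3 + T4 / D4) / 4" "line_eval B' cen = (T4 / D1 + T2 / D2) / 4"
  by (simp_all add: line_eval_centroid line_eval_vertices)

lemma adjacent_product_nonzero: "D1 * D2 * D3 * D4 \<noteq> 0"
  using adjacent_dir_det_nonzero by simp

text \<open>The centroid is the centre of the conic: the cross term vanishes by
  coeff_det_dir_identity.\<close>
lemma bisector_poly_centred:
  "bisector_poly A B A' B' m = bisector_poly A B A' B' cen + 2 * Phi (m - cen)"
proof -
  define w where "w = m - cen"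
  define e where "e L = line_eval L cen" for L
  define l where "l L = line_lin L w" for L
  define cross where "cross =
    (e A * l B + l A * e B) * D3 - (e A * l B' + l A * e B') * D2
    - (e A' * l B + l A' * e B) * D4 + (e A' * l B' + l A' * e B') * D1"
  have m: "line_eval L m = e L + l L" for L
    using line_eval_add[of L cen w] by (simp add: e_def l_def w_def)
  have "bisector_poly A B A' B' m = bisector_poly A B A' B' cen + 2 * Phi w + cross"
    unfolding bisector_poly_eq_side_quad m side_quad_add cross_def
    by (simp add: e_def l_def side_quad_line_lin)
  moreover have "cross = (D1 * D3 - D2 * D4)
      * (T1 * D3 * D4 * l B + T3 * D1 * D2 * l B' + T4 * D2 * D3 * l A + T2 * D1 * D4 * l A')
      / (4 * (D1 * D2 * D3 * D4))"
  proof -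
    \<comment> \<open>stated over fresh variables, on which field_simps is fast\<close>
    have "((a/q2 + c/q3)/k * y + x * ((b/q3 + d/q4)/k)) * q3 - ((a/q2 + c/q3)/k * y' + x * ((d/q1 + b/q2)/k)) * q2
        - ((a/q1 + c/q4)/k * y + x' * ((b/q3 + d/q4)/k)) * q4 + ((a/q1 + c/q4)/k * y' + x' * ((d/q1 + b/q2)/k)) * q1
        = (q1 * q3 - q2 * q4) * (a * q3 * q4 * y + c * q1 * q2 * y' + d * q2 * q3 * x + b * q1 * q4 * x')
          / (k * (q1 * q2 * q3 * q4))"
      if "k \<noteq> 0" "q1 \<noteq> 0" "q2 \<noteq> 0" "q3 \<noteq> 0" "q4 \<noteq> 0"
      for a b c d k x x' y y' q1 q2 q3 q4 :: 'a
      using that by (simp add: field_simps)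
    then show ?thesis
      unfolding cross_def e_def line_eval_centroid_sides
      using powers_of_two_nonzero[OF two] adjacent_dir_det_nonzero by blast
  qed
  moreover have "T1 * D3 * D4 * l B + T3 * D1 * D2 * l B' + T4 * D2 * D3 * l A + T2 * D1 * D4 * l A' = 0"
  proof -
    have "T1 * D3 * D4 * l B + T3 * D1 * D2 * l B' + T4 * D2 * D3 * l A + T2 * D1 * D4 * l A'
        = fst w * (T1 * D3 * D4 * tL B + T3 * D1 * D2 * tL B' + T4 * D2 * D3 * tL A + T2 * D1 * D4 * tL A')
          - snd w * (T1 * D3 * D4 * uL B + T3 * D1 * D2 * uL B' + T4 * D2 * D3 * uL A + T2 * D1 * D4 * uL A')"
      by (simp add: l_def line_lin_def algebra_simps)
    also have "\<dots> = 0" using coeff_det_dir_identity[of A B A' B'] by (simp add: algebra_simps)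
    finally show ?thesis .
  qed
  ultimately show ?thesis by (simp add: w_def)
qed

abbreviation "diag_det \<equiv> det2 (v3 - v1) (v4 - v2)"

lemma diag_det_product:
  "diag_det * (D1 * D2 * D3 * D4) = - (T1 * T2 * D4 + T3 * T4 * D2)"
proof -
  have "D1 * diag_det = - (line_lin A (v3 - v1) * line_lin B (v4 - v2) - line_lin A (v4 - v2) * line_lin B (v3 - v1))"
    by (simp add: line_lin_det2)
  also have "\<dots> = - (T3 / D3 * (T4 / D4) + T1 / D2 * (T2 / D3))"
    by (simp add: line_eval_diff[symmetric] line_eval_vertices)
  finally show ?thesis using adjacent_dir_det_nonzero by (simp add: field_simps)
qed

lemma bisector_poly_centroid:
  "8 * bisector_poly A B A' B' cen = - (dir_det A A' * dir_det B B' * diag_det)"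
proof -
  have "bisector_poly A B A' B' cen * (4 * 4 * (D1 * D2 * D3 * D4))
      = (D1 * D3 - D2 * D4) * (T1 * T2 * D4 + T1 * T4 * D3 + T2 * T3 * D1 + T3 * T4 * D2)"
  proof -
    have "((a/q2 + c/q3)/k * ((b/q3 + d/q4)/k) * q3 - (a/q2 + c/q3)/k * ((d/q1 + b/q2)/k) * q2
        - (a/q1 + c/q4)/k * ((b/q3 + d/q4)/k) * q4 + (a/q1 + c/q4)/k * ((d/q1 + b/q2)/k) * q1)
          * (k * k * (q1 * q2 * q3 * q4))
        = (q1 * q3 - q2 * q4) * (a * b * q4 + a * d * q3 + b * c * q1 + c * d * q2)"
      if "k \<noteq> 0" "q1 \<noteq> 0" "q2 \<noteq> 0" "q3 \<noteq> 0" "q4 \<noteq> 0" for a b c d k q1 q2 q3 q4 :: 'a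
      using that by (simp add: field_simps)
    then show ?thesis
      unfolding bisector_poly_eq_side_quad side_quad_def line_eval_centroid_sides
      using powers_of_two_nonzero[OF two] adjacent_dir_det_nonzero by blast
  qed
  also have "\<dots> = 2 * dir_det A A' * dir_det B B' * (T1 * T2 * D4 + T3 * T4 * D2)"
    using coeff_det_identity[of A B A' B'] dir_det_plucker[of A B A' B'] by (simp add: algebra_simps)
  also have "\<dots> = 2 * dir_det A A' * dir_det B B' * (- (diag_det * (D1 * D2 * D3 * D4)))"
    by (simp add: diag_det_product)
  finally have "(8 * bisector_poly A B A' B' cen + dir_det A A' * dir_det B B' * diag_det)
      * (2 * (D1 * D2 * D3 * D4)) = 0"
    by (simp add: algebra_simps)
  then show ?thesis using two adjacent_product_nonzero by (simp add: eq_neg_iff_add_eq_0)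
qed

lemma PhiQ_at_locus_point:
  assumes "bisector_poly A B A' B' p = 0"
  shows "16 * Phi (p - cen) = dir_det A A' * dir_det B B' * diag_det"
proof -
  have "bisector_poly A B A' B' cen = - (2 * Phi (p - cen))"
    using bisector_poly_centred[of p] assms by (simp add: eq_neg_iff_add_eq_0)
  then show ?thesis using bisector_poly_centroid by simp
qed

end

section \<open>Diagonals and diagonal points\<close>

context quadrilateral
begin

abbreviation "d1 \<equiv> diag1 A B A' B'"
abbreviation "d2 \<equiv> diag2 A B A' B'"

lemma opposite_vertices_distinct: "v1 \<noteq> v3" "v2 \<noteq> v4"
  using vertices_on_sides not_concurrent by metis+

lemma diagonals: "is_line d1" "on_line v1 d1" "on_line v3 d1" "is_line d2" "on_line v2 d2" "on_line v4 d2"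
  unfolding diag1_def diag2_def using line_through opposite_vertices_distinct by blast+

lemma diagonals_distinct: "d1 \<noteq> d2"
proof
  assume d: "d1 = d2"
  have on_d1: "on_line v1 d1" "on_line v2 d1" "on_line v3 d1" "on_line v4 d1" using diagonals d by auto
  have side_eq: "S = d1" if "is_line S" "on_line p S" "on_line q S" "p \<noteq> q" "on_line p d1" "on_line q d1"
    for S p q
    using lines_eq_if_two_common_points[OF that(1) diagonals(1) that(4,2,3,5,6)] .
  have A: "v1 \<noteq> v4 \<Longrightarrow> A = d1" and B: "v1 \<noteq> v2 \<Longrightarrow> B = d1"
    and A': "v2 \<noteq> v3 \<Longrightarrow> A' = d1" and B': "v3 \<noteq> v4 \<Longrightarrow> B' = d1"
    using side_eq sides vertices_on_sides on_d1 by blast+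
  show False
    using A B A' B' sides_distinct opposite_vertices_distinct by metis
qed

lemma parallel_opposite_sides_iff:
  "parallel A A' \<longleftrightarrow> dir_det A A' = 0" "parallel B B' \<longleftrightarrow> dir_det B B' = 0"
  using same_dir_iff_dir_det sides sides_distinct unfolding parallel_def same_dir_def by blast+

lemma parallel_diagonals_iff: "parallel d1 d2 \<longleftrightarrow> diag_det = 0"
  using same_dir_iff_dir_det[OF diagonals(1,4)] diagonals_distinct
    dir_det_eq_0_iff_det2[OF diagonals(1-3) opposite_vertices_distinct(1)
      diagonals(4-6) opposite_vertices_distinct(2)]
  unfolding parallel_def same_dir_def by blast

lemma bisector_poly_diagonals_meet:
  assumes "\<not> same_dir d1 d2"
  shows "bisector_poly A B A' B' (meet d1 d2) = 0"
proof -
  define p where "p = meet d1 d2"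
  have "dir_det d1 d2 \<noteq> 0" using assms same_dir_iff_dir_det diagonals by blast
  then have "p \<in> line_pts v1 v3" "p \<in> line_pts v2 v4"
    using meet_on_line on_line_iff_line_pts diagonals opposite_vertices_distinct unfolding p_def by blast+
  then obtain s r where
    ps: "p = (fst v1 + s * (fst v3 - fst v1), snd v1 + s * (snd v3 - snd v1))" and
    pr: "p = (fst v2 + r * (fst v4 - fst v2), snd v2 + r * (snd v4 - snd v2))"
    unfolding line_pts_def by blast
  have s: "line_eval L p = line_eval L v1 + s * (line_eval L v3 - line_eval L v1)" for L
    unfolding ps by (rule line_eval_affine)
  have r: "line_eval L p = line_eval L v2 + r * (line_eval L v4 - line_eval L v2)" for L
    unfolding pr by (rule line_eval_affine)
  define a where "a = line_eval A p"
  define a' where "a' = line_eval A' p"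
  define b where "b = line_eval B p"
  define b' where "b' = line_eval B' p"
  note D = adjacent_dir_det_nonzero
  have a: "a * D3 = s * T3" "a * D2 = (1 - r) * T1"
    using s[of A] r[of A] D by (simp_all only: a_def line_eval_vertices) (simp_all add: field_simps)
  have a': "a' = (1 - s) * T1 / D1" "a' = r * T3 / D4"
    using s[of A'] r[of A'] D by (simp_all only: a'_def line_eval_vertices) (simp_all add: field_simps)
  have b: "b = r * T4 / D4"
    using r[of B] D by (simp only: b_def line_eval_vertices) (simp add: field_simps)
  have b': "b' = (1 - s) * T4 / D1"
    using s[of B'] D by (simp only: b'_def line_eval_vertices) (simp add: field_simps)
  have a'_D1: "a' * D1 = (1 - s) * T1" using D by (simp add: a'(1))
  have a'_D4: "a' * D4 = r * T3" using D by (simp add: a'(2))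
  have "T3 * b = T4 * a'" "T1 * b' = T4 * a'"
    by (subst a'(2), simp add: b ac_simps) (subst a'(1), simp add: b' ac_simps)
  moreover have "(a * D3) * b - (a * D2) * b' - (a' * D4) * b + (a' * D1) * b' = (s - r) * (T3 * b - T1 * b')"
    unfolding a a'_D1 a'_D4 by (simp add: algebra_simps)
  ultimately have "(a * D3) * b - (a * D2) * b' - (a' * D4) * b + (a' * D1) * b' = 0" by simp
  then have "side_quad A B A' B' a a' b b' = 0" by (simp add: side_quad_def algebra_simps)
  then show ?thesis by (simp add: bisector_poly_eq_side_quad a_def a'_def b_def b'_def p_def)
qed

lemma bisector_poly_finite_diag_point:
  assumes "is_finite_diag_point A B A' B' p"
  shows "bisector_poly A B A' B' p = 0"
proof -
  have pair: "bisector_poly A B A' B' p = 0"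
    if "on_line p L1" "on_line p L2" "{L1, L2} = {A, A'} \<or> {L1, L2} = {B, B'}" for L1 L2
    using that by (auto simp: bisector_poly_def pair_normal_def det2_def on_line_iff_eval doubleton_eq_iff)
  from assms consider "\<not> same_dir A A'" "p = meet A A'" | "\<not> same_dir B B'" "p = meet B B'"
    | "\<not> same_dir d1 d2" "p = meet d1 d2"
    unfolding is_finite_diag_point_def by blast
  then show ?thesis
  proof cases
    case 1 then show ?thesis using pair meet_on_line same_dir_iff_dir_det sides by metis
  next
    case 2 then show ?thesis using pair meet_on_line same_dir_iff_dir_det sides by metis
  next
    case 3 then show ?thesis using bisector_poly_diagonals_meet by simp
  qed
qed

lemma PhiQ_at_diag_point_eq_0_iff:
  assumes "is_finite_diag_point A B A' B' p"
  shows "Phi (p - cen) = 0 \<longleftrightarrow> parallel A A' \<or> parallel B B' \<or> parallel d1 d2"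
  using PhiQ_at_locus_point[OF bisector_poly_finite_diag_point[OF assms]]
    parallel_opposite_sides_iff parallel_diagonals_iff powers_of_two_nonzero(3)[OF two]
  by (metis mult_eq_0_iff)

end

section \<open>Degeneracy of the conic\<close>

lemma centred_conic_factors:
  fixes g b a h k :: "'b::alg_closed_field"
  shows "\<exists>p1 q1 r1 p2 q2 r2. \<forall>x y.
    g * (x - h)^2 - 2 * b * (x - h) * (y - k) + a * (y - k)^2 - 0 = (p1 * x + q1 * y + r1) * (p2 * x + q2 * y + r2)"
proof (cases "g = 0")
  case True
  show ?thesis
    by (rule exI[of _ 0], rule exI[of _ 1], rule exI[of _ "- k"], rule exI[of _ "- 2 * b"], rule exI[of _ a],
        rule exI[of _ "2 * b * h - a * k"]) (simp add: True algebra_simps power2_eq_square)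
next
  case False
  obtain s where s: "s ^ 2 = b ^ 2 - a * g" using nth_root_exists[of 2 "b ^ 2 - a * g"] by auto
  define c where "c = (b + s) / g"
  have "g * (x - h)^2 - 2 * b * (x - h) * (y - k) + a * (y - k)^2 - 0
      = (1 * x + - c * y + (c * k - h)) * (g * x + - (b - s) * y + ((b - s) * k - g * h))" for x y
  proof -
    have "(1 * x + - c * y + (c * k - h)) * (g * x + - (b - s) * y + ((b - s) * k - g * h))
        = (g * (x - h) - (b + s) * (y - k)) * (g * (x - h) - (b - s) * (y - k)) / g"
      using False by (simp add: c_def field_simps)
    also have "(g * (x - h) - (b + s) * (y - k)) * (g * (x - h) - (b - s) * (y - k))
        = g * (g * (x - h)^2 - 2 * b * (x - h) * (y - k)) + (b^2 - s^2) * (y - k)^2"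
      by (simp add: algebra_simps power2_eq_square)
    also have "\<dots> = g * (g * (x - h)^2 - 2 * b * (x - h) * (y - k) + a * (y - k)^2)"
      unfolding s by (simp add: algebra_simps)
    finally show ?thesis using False by simp
  qed
  then show ?thesis by blast
qed

text \<open>A product of two affine factors that is even about the centre must have both
  linear parts proportional when the constant term is nonzero; then the quadratic part
  is a square, contradicting the nonzero discriminant.\<close>
lemma centred_conic_factors_imp_constant_zero:
  fixes g b a h k c :: "'b::field"
  assumes two: "(2::'b) \<noteq> 0" and disc: "a * g - b^2 \<noteq> 0"
    and f: "\<forall>x y. g * (x - h)^2 - 2 * b * (x - h) * (y - k) + a * (y - k)^2 - c
              = (p1 * x + q1 * y + r1) * (p2 * x + q2 * y + r2)"
  shows "c = 0"
proof (rule ccontr)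
  assume c: "c \<noteq> 0"
  define R1 where "R1 = p1 * h + q1 * k + r1"
  define R2 where "R2 = p2 * h + q2 * k + r2"
  have F: "g * x^2 - 2 * b * x * y + a * y^2 - c = (p1 * x + q1 * y + R1) * (p2 * x + q2 * y + R2)" for x y
    using f[rule_format, of "x + h" "y + k"] unfolding R1_def R2_def by (simp add: algebra_simps)
  have R: "R1 * R2 = - c" using F[of 0 0] by simp
  have "2 * (p1 * R2 + p2 * R1) = 0" "2 * (q1 * R2 + q2 * R1) = 0"
    using F[of 1 0] F[of "-1" 0] F[of 0 1] F[of 0 "-1"] by (simp_all add: algebra_simps)
  then have odd: "p1 * R2 + p2 * R1 = 0" "q1 * R2 + q2 * R1 = 0" using two by (metis mult_eq_0_iff)+
  have g: "g = p1 * p2" and a: "a = q1 * q2"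
    using F[of 1 0] F[of 0 1] R odd by (simp_all add: algebra_simps)
  have "g - 2 * b + a - c = (p1 + q1 + R1) * (p2 + q2 + R2)" using F[of 1 1] by simp
  also have "\<dots> = p1 * p2 + q1 * q2 + R1 * R2 + (p1 * q2 + p2 * q1) + (p1 * R2 + p2 * R1) + (q1 * R2 + q2 * R1)"
    by (simp add: algebra_simps)
  finally have "p1 * q2 + p2 * q1 + 2 * b = 0" unfolding odd g a R by (simp add: algebra_simps)
  then have b: "2 * b = - (p1 * q2 + p2 * q1)" by (metis add.commute add_eq_0_iff2)
  have "(p1 * q2 - p2 * q1) * R2 = q2 * (p1 * R2 + p2 * R1) - p2 * (q1 * R2 + q2 * R1)"
    by (simp add: algebra_simps)
  then have "p1 * q2 = p2 * q1" using odd R c by auto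
  have "4 * (a * g - b^2) = 4 * (q1 * q2) * (p1 * p2) - (2 * b)^2"
    by (simp add: a g power2_eq_square algebra_simps)
  also have "\<dots> = - ((p1 * q2 - p2 * q1)^2)"
    unfolding b by (simp add: algebra_simps power2_eq_square)
  finally have "4 * (a * g - b^2) = 0" using \<open>p1 * q2 = p2 * q1\<close> by simp
  then show False using disc powers_of_two_nonzero[OF two] by simp
qed

lemma centred_conic_factors_iff:
  fixes g b a h k c :: "'b::alg_closed_field"
  assumes "(2::'b) \<noteq> 0" "a * g - b^2 \<noteq> 0"
  shows "(\<exists>p1 q1 r1 p2 q2 r2. \<forall>x y. g * (x - h)^2 - 2 * b * (x - h) * (y - k) + a * (y - k)^2 - c
           = (p1 * x + q1 * y + r1) * (p2 * x + q2 * y + r2)) \<longleftrightarrow> c = 0"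
proof
  assume "\<exists>p1 q1 r1 p2 q2 r2. \<forall>x y. g * (x - h)^2 - 2 * b * (x - h) * (y - k) + a * (y - k)^2 - c
           = (p1 * x + q1 * y + r1) * (p2 * x + q2 * y + r2)"
  then show "c = 0" using centred_conic_factors_imp_constant_zero[OF assms] by blast
qed (use centred_conic_factors in simp)

context quadrilateral
begin

lemma conic_degenerate_iff_PhiQ: "conic_degenerate A B A' B' p \<longleftrightarrow> Phi (p - cen) = 0"
proof -
  have two': "(2::'a alg_closure) \<noteq> 0"
    using two to_ac_eq_0_iff[of "2::'a"] by simp
  have "alphaQ A B A' B' * gammaQ A B A' B' - betaQ A B A' B' ^ 2 \<noteq> 0"
    unfolding PhiQ_discriminant using adjacent_dir_det_nonzero by simp
  then have disc': "to_ac (alphaQ A B A' B') * to_ac (gammaQ A B A' B') - to_ac (betaQ A B A' B') ^ 2 \<noteq> 0"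
    by (metis to_ac_diff to_ac_eq_0_iff to_ac_mult to_ac_power)
  show ?thesis
    by (simp add: conic_degenerate_def Let_def centred_conic_factors_iff[OF two' disc'])
qed

end

section \<open>The locus in the degenerate cases\<close>

text \<open>A binary quadratic form of nonzero discriminant vanishing on two independent
  vectors e, f is a multiple of det2 w f * det2 e w.\<close>
lemma quadratic_form_zero_iff:
  fixes al be ga :: "'a::field"
  defines "Q w \<equiv> ga * fst w^2 - 2 * be * fst w * snd w + al * snd w^2"
  assumes two: "(2::'a) \<noteq> 0" and disc: "al * ga - be^2 \<noteq> 0"
    and e: "Q e = 0" and f: "Q f = 0" and ef: "det2 e f \<noteq> 0"
  shows "Q w = 0 \<longleftrightarrow> det2 w f = 0 \<or> det2 e w = 0"
proof -
  define bil where "bil = ga * fst e * fst f - be * (fst e * snd f + snd e * fst f) + al * snd e * snd f"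
  define x where "x v = det2 v f / det2 e f" for v
  define y where "y v = det2 e v / det2 e f" for v
  have coords: "v = (x v * fst e + y v * fst f, x v * snd e + y v * snd f)" for v
  proof -
    have "det2 v f * fst e + det2 e v * fst f = det2 e f * fst v"
      "det2 v f * snd e + det2 e v * snd f = det2 e f * snd v"
      by (simp_all add: det2_def algebra_simps)
    then show ?thesis using ef by (cases v) (simp add: x_def y_def field_simps)
  qed
  have Q_coords: "Q v = 2 * x v * y v * bil" for v
  proof -
    have "Q (a * fst e + b * fst f, a * snd e + b * snd f) = a^2 * Q e + 2 * a * b * bil + b^2 * Q f" for a b
      by (simp add: Q_def bil_def algebra_simps power2_eq_square)
    then show ?thesis using coords[of v] e f by (metis add.right_neutral add_0 mult_zero_right)
  qed
  have "bil \<noteq> 0"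
  proof
    assume "bil = 0"
    then have "Q (1, 0) = 0" "Q (0, 1) = 0" "Q (1, 1) = 0" using Q_coords by simp_all
    then have "ga = 0" "al = 0" "2 * be = 0" by (simp_all add: Q_def)
    then show False using disc two by simp
  qed
  then show ?thesis using Q_coords[of w] two ef by (simp add: x_def y_def)
qed

context quadrilateral
begin

lemma bisector_locus_parallel_AA':
  assumes par: "parallel A A'"
  shows "bisector_locus A B A' B' = midline A A' \<union> line_pts (midA A B A' B') (midA' A B A' B')"
proof -
  have sd: "same_dir A A'" and vne: "vL A \<noteq> vL A'"
    using par unfolding parallel_def same_dir_def line_eq_iff_coeffs by auto
  define h where "h m = line_eval B m * dir_det A B' + line_eval B' m * dir_det A B" for m
  define k1 where "k1 = tL B * dir_det A B' + tL B' * dir_det A B"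
  define k2 where "k2 = - (uL B * dir_det A B' + uL B' * dir_det A B)"
  have h_affine: "h m = k1 * fst m + k2 * snd m + (vL B * dir_det A B' + vL B' * dir_det A B)" for m
    by (simp add: h_def k1_def k2_def line_eval_def algebra_simps)
  have "uL A * k1 + tL A * k2 = - 2 * dir_det A B * dir_det A B'"
    by (simp add: k1_def k2_def dir_det_def algebra_simps)
  then have k: "k1 \<noteq> 0 \<or> k2 \<noteq> 0"
    using adjacent_dir_det_nonzero two dir_det_swap[of A B'] by auto
  have D_A: "dir_det A B = - D2" "dir_det A B' = D3"
    using sd dir_det_swap[of B A'] by (simp_all add: same_dir_def dir_det_def)
  have h_midA: "h (midA A B A' B') = 0"
    using adjacent_dir_det_nonzero dir_det_swap[of A B']
    by (simp add: h_def midA_def line_eval_midpt[OF two] line_eval_vertices field_simps)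
  have h_midA': "h (midA' A B A' B') = 0"
    using adjacent_dir_det_nonzero
    by (simp add: h_def D_A midA'_def line_eval_midpt[OF two] line_eval_vertices field_simps)
  have "line_eval A (midA A B A' B') = 0"
    by (simp add: midA_def line_eval_midpt[OF two] line_eval_vertices)
  moreover have "line_eval A (midA' A B A' B') = line_eval A' (midA' A B A' B') + (vL A - vL A')"
    using sd by (simp add: line_eval_def same_dir_def)
  moreover have "line_eval A' (midA' A B A' B') = 0"
    by (simp add: midA'_def line_eval_midpt[OF two] line_eval_vertices)
  ultimately have mid_ne: "midA A B A' B' \<noteq> midA' A B A' B'" using vne by auto
  have "m \<in> bisector_locus A B A' B' \<longleftrightarrow> (line_eval A m + line_eval A' m) * h m = 0" for m
    by (simp add: mem_bisector_locus_iff bisector_poly_same_dir_factor[OF sd] h_def)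
  also have "\<dots> m \<longleftrightarrow> m \<in> midline A A' \<or> m \<in> line_pts (midA A B A' B') (midA' A B A' B')" for m
    using midline_iff[OF two sides(1) sd] affine_zero_set_eq_line_pts[OF h_affine k h_midA h_midA' mid_ne]
    by simp
  finally show ?thesis by blast
qed

abbreviation "mD1 \<equiv> midD1 A B A' B'"
abbreviation "mD2 \<equiv> midD2 A B A' B'"

lemma bisector_poly_diag_midpoint: "bisector_poly A B A' B' mD1 = 0"
proof -
  have "bisector_poly A B A' B' mD1 * (2 * 2 * D1 * D3) = T2 * T3 * D1 + T1 * T4 * D3 - T3 * T4 * D2 - T1 * T2 * D4"
  proof -
    have "((0 + c/q3)/k * ((0 + b/q3)/k) * q3 - (0 + c/q3)/k * ((d/q1 + 0)/k) * q2
        - (a/q1 + 0)/k * ((0 + b/q3)/k) * q4 + (a/q1 + 0)/k * ((d/q1 + 0)/k) * q1) * (k * k * q1 * q3)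
        = b * c * q1 + a * d * q3 - c * d * q2 - a * b * q4"
      if "k \<noteq> 0" "q1 \<noteq> 0" "q3 \<noteq> 0" for a b c d k q1 q2 q3 q4 :: 'a
      using that by (simp add: field_simps)
    then show ?thesis
      unfolding bisector_poly_eq_side_quad side_quad_def midD1_def line_eval_midpt[OF two] line_eval_vertices
      using two adjacent_dir_det_nonzero by blast
  qed
  also have "\<dots> = 0" using coeff_det_identity[of A B A' B'] by (simp add: algebra_simps)
  finally show ?thesis using powers_of_two_nonzero[OF two] adjacent_dir_det_nonzero by simp
qed

lemma parallel_diagonals_isotropic:
  assumes "diag_det = 0"
  shows "Phi (v4 - v2) = 0" "Phi (mD2 - mD1) = 0"
proof -
  have S: "T1 * T2 * D4 + T3 * T4 * D2 = 0" "T1 * T4 * D3 + T2 * T3 * D1 = 0"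
    using diag_det_product assms coeff_det_identity[of A B A' B'] by (simp_all add: algebra_simps)
  have "2 * Phi (v4 - v2) = side_quad A B A' B'
      (line_lin A (v4 - v2)) (line_lin A' (v4 - v2)) (line_lin B (v4 - v2)) (line_lin B' (v4 - v2))"
    by (simp add: side_quad_line_lin)
  also have "\<dots> = ((0 - T1/D2) * (T4/D4 - 0) * D3 - (0 - T1/D2) * (0 - T2/D2) * D2
      - (T3/D4 - 0) * (T4/D4 - 0) * D4 + (T3/D4 - 0) * (0 - T2/D2) * D1)"
    by (simp only: side_quad_def line_eval_diff[symmetric] line_eval_vertices)
  also have "\<dots> = - (T1 * T4 * D3 + T2 * T3 * D1 + (T1 * T2 * D4 + T3 * T4 * D2)) / (D2 * D4)"
    using adjacent_dir_det_nonzero by (simp add: field_simps)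
  finally show "Phi (v4 - v2) = 0" using S two by simp
  have "bisector_poly A B A' B' cen = 0" using bisector_poly_centroid assms powers_of_two_nonzero[OF two] by simp
  then have "Phi (mD1 - cen) = 0"
    using bisector_poly_centred[of mD1] bisector_poly_diag_midpoint two by simp
  moreover have "mD1 - cen = ((- 1 / 2) * fst (mD2 - mD1), (- 1 / 2) * snd (mD2 - mD1))"
    using two powers_of_two_nonzero[OF two] by (simp add: centroid_def midpt_def field_simps)
  then have "Phi (mD1 - cen) = (- 1 / 2)^2 * Phi (mD2 - mD1)"
    by (simp only: fst_conv snd_conv PhiQ_scale)
  ultimately show "Phi (mD2 - mD1) = 0" using two by simp
qed

lemma parallel_diagonals_independent_directions:
  assumes "parallel d1 d2"
  shows "det2 (v4 - v2) (mD2 - mD1) \<noteq> 0"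
proof -
  have "\<not> on_line v1 d2"
    using same_dir_common_point_eq[of d1 d2 v1] assms diagonals(2) unfolding parallel_def same_dir_def by blast
  then have "det2 (v1 - v2) (v4 - v2) \<noteq> 0"
    using on_line_iff_line_pts[OF diagonals(4) opposite_vertices_distinct(2) diagonals(5,6)]
      mem_line_pts_iff_det2[OF opposite_vertices_distinct(2)] by blast
  moreover have "det2 (v4 - v2) (mD2 - mD1) * 2 = 2 * det2 (v1 - v2) (v4 - v2) + diag_det"
    using two powers_of_two_nonzero[OF two] by (simp add: midD1_def midD2_def midpt_def det2_def field_simps)
  ultimately show ?thesis using assms parallel_diagonals_iff two by auto
qed

lemma midline_diagonals_iff:
  assumes "parallel d1 d2"
  shows "m \<in> midline d1 d2 \<longleftrightarrow> det2 (v4 - v2) (m - cen) = 0"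
proof -
  have sd: "same_dir d1 d2" using assms unfolding parallel_def same_dir_def by blast
  have "cen \<in> midline d1 d2"
    using midpt_on_line[OF two] diagonals unfolding centroid_def midD1_def midD2_def midline_def by blast
  then have cen: "line_eval d1 cen + line_eval d2 cen = 0" using midline_iff[OF two diagonals(1) sd] by blast
  have "line_eval d1 m + line_eval d2 m = line_eval d1 cen + line_eval d2 cen + 2 * line_lin d2 (m - cen)"
    using sd by (simp add: line_eval_def line_lin_def same_dir_def algebra_simps)
  then have midl: "m \<in> midline d1 d2 \<longleftrightarrow> line_lin d2 (m - cen) = 0"
    using midline_iff[OF two diagonals(1) sd] cen two by simp
  have "line_lin d2 (v4 - v2) = 0"
    using diagonals(5,6) by (simp add: line_eval_diff[symmetric] on_line_iff_eval)
  then obtain s where s: "v4 - v2 = (s * uL d2, s * tL d2)"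
    using line_lin_eq_0_iff[OF diagonals(4)] by blast
  have "s \<noteq> 0" using s opposite_vertices_distinct(2) by (auto simp: zero_prod_def[symmetric])
  moreover have "det2 (v4 - v2) (m - cen) = - s * line_lin d2 (m - cen)"
    by (simp add: s det2_def line_lin_def algebra_simps)
  ultimately show ?thesis using midl by simp
qed

lemma diag_midpoints_line_iff:
  assumes "mD1 \<noteq> mD2"
  shows "m \<in> line_pts mD1 mD2 \<longleftrightarrow> det2 (m - cen) (mD2 - mD1) = 0"
proof -
  have "det2 (m - mD1) (mD2 - mD1) = det2 (m - cen) (mD2 - mD1)"
    using two powers_of_two_nonzero[OF two] by (simp add: centroid_def midpt_def det2_def field_simps)
  then show ?thesis using mem_line_pts_iff_det2[OF assms] by simp
qed

lemma bisector_locus_parallel_diagonals: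
  assumes par: "parallel d1 d2"
  shows "bisector_locus A B A' B' = midline d1 d2 \<union> line_pts mD1 mD2"
proof -
  have dd: "diag_det = 0" using par parallel_diagonals_iff by simp
  have ind: "det2 (v4 - v2) (mD2 - mD1) \<noteq> 0" using parallel_diagonals_independent_directions[OF par] .
  then have "mD1 \<noteq> mD2" by (auto simp: det2_def)
  have "alphaQ A B A' B' * gammaQ A B A' B' - betaQ A B A' B'^2 \<noteq> 0"
    unfolding PhiQ_discriminant using adjacent_dir_det_nonzero by simp
  then have Phi_zero: "Phi w = 0 \<longleftrightarrow> det2 w (mD2 - mD1) = 0 \<or> det2 (v4 - v2) w = 0" for w
    using quadratic_form_zero_iff[OF two _ _ _ ind] parallel_diagonals_isotropic[OF dd]
    unfolding PhiQ_def by blast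
  have "m \<in> bisector_locus A B A' B' \<longleftrightarrow> Phi (m - cen) = 0" for m
    using mem_bisector_locus_iff bisector_poly_centred[of m] bisector_poly_centroid dd two
      powers_of_two_nonzero[OF two] by simp
  then show ?thesis
    using Phi_zero midline_diagonals_iff[OF par] diag_midpoints_line_iff[OF \<open>mD1 \<noteq> mD2\<close>] by blast
qed

end

lemma quadrilateral_rotate:
  assumes "quadrilateral A B A' B'"
  shows "quadrilateral B A' B' A"
proof -
  interpret quadrilateral A B A' B' by fact
  have "is_quad B A' B' A"
    unfolding is_quad_def using sides sides_distinct adjacent_not_same_dir not_concurrent by auto
  then show ?thesis using two by unfold_locales
qed

lemma bisector_locus_rotate: "bisector_locus B A' B' A = bisector_locus A B A' B'"
  unfolding bisector_locus_def bisects_with_mid_def crosses_sym[of _ A' A] midpair_sym[of A' A] by blast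

context quadrilateral
begin

lemma bisector_locus_parallel_BB':
  assumes "parallel B B'"
  shows "bisector_locus A B A' B' = midline B B' \<union> line_pts (midB A B A' B') (midB' A B A' B')"
proof -
  interpret rotated: quadrilateral B A' B' A using quadrilateral_rotate quadrilateral_axioms .
  have "midA B A' B' A = midB A B A' B'" "midA' B A' B' A = midB' A B A' B'"
    by (simp_all add: midA_def midB_def midA'_def midB'_def V1_def V2_def V3_def V4_def midpt_sym)
  then show ?thesis
    using rotated.bisector_locus_parallel_AA' assms bisector_locus_rotate by metis
qed

end

theorem theorem5p2:
  fixes A B A' B' :: "'a::field line" and ab :: "'a pt"
  assumes char: "(2::'a) \<noteq> 0"
    and Q: "is_quad A B A' B'"
    and dp: "is_finite_diag_point A B A' B' ab"
  shows "(conic_degenerate A B A' B' ab \<longleftrightarrow>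
            parallel A A' \<or> parallel B B' \<or> parallel (diag1 A B A' B') (diag2 A B A' B'))
       \<and> (parallel A A' \<longrightarrow>
            bisector_locus A B A' B' =
              midline A A' \<union> line_pts (midA A B A' B') (midA' A B A' B'))
       \<and> (parallel B B' \<longrightarrow>
            bisector_locus A B A' B' =
              midline B B' \<union> line_pts (midB A B A' B') (midB' A B A' B'))
       \<and> (parallel (diag1 A B A' B') (diag2 A B A' B') \<longrightarrow>
            bisector_locus A B A' B' =
              midline (diag1 A B A' B') (diag2 A B A' B')
              \<union> line_pts (midD1 A B A' B') (midD2 A B A' B'))"
proof -
  interpret quadrilateral A B A' B' using char Q by unfold_locales
  show ?thesis
    using conic_degenerate_iff_PhiQ PhiQ_at_diag_point_eq_0_iff[OF dp] bisector_locus_parallel_AA'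
      bisector_locus_parallel_BB' bisector_locus_parallel_diagonals
    by blast
qed

end
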